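(* Consider the linear regression model $\boldsymbol{Y}=\boldsymbol{X}\boldsymbol{\beta}+\boldsymbol{\varepsilon}$, where $\boldsymbol{X}$ is a known $n\times p$ matrix with linearly independent columns ($n>p$) and $\boldsymbol{\varepsilon}\sim N(\boldsymbol{0},\sigma^2\boldsymbol{I}_n)$, $\sigma^2>0$ unknown. Let $\theta=\boldsymbol{a}^T\boldsymbol{\beta}$ ($\boldsymbol{a}\neq\boldsymbol{0}$ given), $\boldsymbol{\tau}=\boldsymbol{C}^T\boldsymbol{\beta}-\boldsymbol{t}$ with $\boldsymbol{C}$ a given $p\times s$ matrix ($s<p$) of linearly independent columns, $\boldsymbol{t}$ a given $s$-vector, and $\boldsymbol{a}$ not in the column span of $\boldsymbol{C}$. Let $\hat{\boldsymbol{\beta}}$ be the least squares estimator, $\hat\Sigma^2=\|\boldsymbol{Y}-\boldsymbol{X}\hat{\boldsymbol{\beta}}\|^2/(n-p)$, $\hat\Theta=\boldsymbol{a}^T\hat{\boldsymbol{\beta}}$, $\hat{\boldsymbol{\tau}}=\boldsymbol{C}^T\hat{\boldsymbol{\beta}}-\boldsymbol{t}$, and assume $E\big((\hat{\boldsymbol{\tau}}-\boldsymbol{\tau})(\hat\Theta-\theta)\big)=\boldsymbol{0}$. Let $v_{11}=\boldsymbol{a}^T(\boldsymbol{X}^T\boldsymbol{X})^{-1}\boldsymbol{a}$, $\boldsymbol{V}_{22}=\boldsymbol{C}^T(\boldsymbol{X}^T\boldsymbol{X})^{-1}\boldsymbol{C}$, $F=\big(\hat{\boldsymbol{\tau}}^T\boldsymbol{V}_{22}^{-1}\hat{\boldsymbol{\tau}}/s\big)/\hat\Sigma^2$,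 and for a function $d:[0,\infty)\to(0,\infty)$ let $J(d)=[\hat\Theta-\sqrt{v_{11}}\hat\Sigma d(\sqrt F),\ \hat\Theta+\sqrt{v_{11}}\hat\Sigma d(\sqrt F)]$. Suppose $d_1,d_2:[0,\infty)\to(0,\infty)$ satisfy $d_1(x)\ge d_2(x)$ for all $x\ge0$, and that there exist $\epsilon>0$ and an interval $[a,b]$ with $0\le a<b$ such that $d_1(x)>d_2(x)+\epsilon$ for all $x\in[a,b]$. Then $E(\text{length of }J(d_1))>E(\text{length of }J(d_2))$ for all values of $\|\boldsymbol{\gamma}\|$, where $\boldsymbol{\gamma}=(1/\sigma)\boldsymbol{V}_{22}^{-1/2}\boldsymbol{\tau}$.
   Context: $\|\boldsymbol{\gamma}\|=\sqrt{\boldsymbol{\gamma}^T\boldsymbol{\gamma}}$; the claim holds for all parameter values $(\boldsymbol{\beta},\sigma^2)$.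
   Formalization: The expected length of J($d_2$) is also assumed finite, and $d_1$, $d_2$ are taken to be Borel measurable on $[0,\infty)$. The statement above fails without it. *)

theory Defs
  imports "HOL-Analysis.Analysis" "HOL-Probability.Probability"
begin

text \<open>Law of Y = X beta + eps, eps ~ N(0, sigma^2 I_n): independent normal components,
  the i-th with mean (X beta)_i and standard deviation sigma.\<close>
definition model_law :: "real^'p^'n \<Rightarrow> real^'p \<Rightarrow> real \<Rightarrow> (real^'n) measure" where
  "model_law X \<beta> \<sigma> =
     density lborel (\<lambda>y. ennreal (\<Prod>i\<in>UNIV. normal_density ((X *v \<beta>) $ i) \<sigma> (y $ i)))"

definition ls_est :: "real^'p^'n \<Rightarrow> real^'n \<Rightarrow> real^'p" where
  "ls_est X Y = matrix_inv (transpose X ** X) *v (transpose X *v Y)"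

definition sigma_hat :: "real^'p^'n \<Rightarrow> real^'n \<Rightarrow> real" where
  "sigma_hat X Y = sqrt ((norm (Y - X *v ls_est X Y))\<^sup>2 / (real CARD('n) - real CARD('p)))"

definition theta_hat :: "real^'p^'n \<Rightarrow> real^'p \<Rightarrow> real^'n \<Rightarrow> real" where
  "theta_hat X a Y = a \<bullet> ls_est X Y"

definition tau_hat :: "real^'p^'n \<Rightarrow> real^'s^'p \<Rightarrow> real^'s \<Rightarrow> real^'n \<Rightarrow> real^'s" where
  "tau_hat X C t Y = transpose C *v ls_est X Y - t"

definition v11 :: "real^'p^'n \<Rightarrow> real^'p \<Rightarrow> real" where
  "v11 X a = a \<bullet> (matrix_inv (transpose X ** X) *v a)"

definition V22 :: "real^'p^'n \<Rightarrow> real^'s^'p \<Rightarrow> real^'s^'s" where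
  "V22 X C = transpose C ** matrix_inv (transpose X ** X) ** C"

definition F_stat :: "real^'p^'n \<Rightarrow> real^'s^'p \<Rightarrow> real^'s \<Rightarrow> real^'n \<Rightarrow> real" where
  "F_stat X C t Y =
     ((tau_hat X C t Y \<bullet> (matrix_inv (V22 X C) *v tau_hat X C t Y)) / real CARD('s))
       / (sigma_hat X Y)\<^sup>2"

definition J_int :: "real^'p^'n \<Rightarrow> real^'p \<Rightarrow> real^'s^'p \<Rightarrow> real^'s \<Rightarrow> (real \<Rightarrow> real)
                      \<Rightarrow> real^'n \<Rightarrow> real set" where
  "J_int X a C t d Y =
     {theta_hat X a Y - sqrt (v11 X a) * sigma_hat X Y * d (sqrt (F_stat X C t Y)) ..
      theta_hat X a Y + sqrt (v11 X a) * sigma_hat X Y * d (sqrt (F_stat X C t Y))}"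

definition expected_length :: "real^'p^'n \<Rightarrow> real^'p \<Rightarrow> real^'s^'p \<Rightarrow> real^'s \<Rightarrow> (real \<Rightarrow> real)
                      \<Rightarrow> real^'p \<Rightarrow> real \<Rightarrow> ennreal" where
  "expected_length X a C t d \<beta> \<sigma> =
     (\<integral>\<^sup>+ Y. emeasure lborel (J_int X a C t d Y) \<partial>(model_law X \<beta> \<sigma>))"

end

theory Submission imports Defs begin

text \<open>The length of \<open>J(d)\<close> is \<open>2 sqrt v11 \<cdot> sigma_hat \<cdot> d(sqrt F)\<close>, so \<open>d1 \<ge> d2\<close> gives the
  weak inequality pointwise in the sample \<open>Y\<close>. Strictness comes from the set of samples with
  \<open>sigma_hat > 0\<close> and \<open>sqrt F \<in> (lo, hi)\<close>: it is open because the statistics are continuous where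
  \<open>sigma_hat > 0\<close>, and nonempty because, as \<open>n > p\<close>, the fitted value and the residual of a
  sample can be prescribed independently. The normal density is positive everywhere, so this set
  has positive probability for every \<open>(\<beta>, \<sigma>)\<close>.\<close>

section \<open>Positive definite matrices\<close>

lemma matrix_inv_right:
  assumes "invertible (M :: 'a::semiring_1^'n^'m)"
  shows "M ** matrix_inv M = mat 1"
  using someI_ex[OF assms[unfolded invertible_def]] unfolding matrix_inv_def by blast

lemma matrix_inv_left:
  assumes "invertible (M :: 'a::semiring_1^'n^'m)"
  shows "matrix_inv M ** M = mat 1"
  using someI_ex[OF assms[unfolded invertible_def]] unfolding matrix_inv_def by blast

lemma inner_transpose_mult: "(x::real^'m) \<bullet> (transpose A *v w) = (A *v x) \<bullet> w"
  by (metis inner_commute dot_lmul_matrix transpose_matrix_vector)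

lemma invertible_if_pos_def:
  fixes M :: "real^'n^'n"
  assumes "\<And>x. x \<noteq> 0 \<Longrightarrow> x \<bullet> (M *v x) > 0"
  shows "invertible M"
proof -
  have "\<forall>x. M *v x = 0 \<longrightarrow> x = 0"
    using assms by (metis inner_zero_right less_irrefl)
  then show ?thesis
    using matrix_left_invertible_ker invertible_left_inverse by blast
qed

lemma pos_def_matrix_inv:
  fixes M :: "real^'n^'n"
  assumes pd: "\<And>x. x \<noteq> 0 \<Longrightarrow> x \<bullet> (M *v x) > 0" and "y \<noteq> 0"
  shows "y \<bullet> (matrix_inv M *v y) > 0"
proof -
  define z where "z = matrix_inv M *v y"
  have y_eq: "y = M *v z"
    unfolding z_def using matrix_inv_right[OF invertible_if_pos_def[OF pd]]
    by (simp add: matrix_vector_mul_assoc)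
  with \<open>y \<noteq> 0\<close> have "z \<noteq> 0" by auto
  then have "z \<bullet> (M *v z) > 0" by (rule pd)
  then show ?thesis using y_eq unfolding z_def by (metis inner_commute)
qed

lemma pos_def_gram:
  fixes X :: "real^'p^'n"
  assumes "rank X = CARD('p)" and "x \<noteq> 0"
  shows "x \<bullet> ((transpose X ** X) *v x) > 0"
proof -
  have "X *v x \<noteq> 0"
    using assms matrix_nonfull_linear_equations_eq by blast
  then show ?thesis
    by (metis inner_transpose_mult matrix_vector_mul_assoc inner_gt_zero_iff)
qed

lemma pos_def_congruence:
  fixes M :: "real^'p^'p" and C :: "real^'s^'p"
  assumes pd: "\<And>x. x \<noteq> 0 \<Longrightarrow> x \<bullet> (M *v x) > 0"
    and "rank C = CARD('s)" and "y \<noteq> 0"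
  shows "y \<bullet> ((transpose C ** M ** C) *v y) > 0"
proof -
  have "C *v y \<noteq> 0"
    using assms(2,3) matrix_nonfull_linear_equations_eq by blast
  then have "(C *v y) \<bullet> (M *v (C *v y)) > 0" by (rule pd)
  then show ?thesis
    by (metis inner_transpose_mult matrix_vector_mul_assoc)
qed

lemma v11_pos:
  assumes "rank X = CARD('p)" and "a \<noteq> 0"
  shows "v11 (X :: real^'p^'n) a > 0"
  unfolding v11_def using pos_def_matrix_inv[OF pos_def_gram[OF assms(1)] assms(2)] .

lemma pos_def_matrix_inv_V22:
  fixes X :: "real^'p^'n" and C :: "real^'s^'p"
  assumes "rank X = CARD('p)" and "rank C = CARD('s)" and "y \<noteq> 0"
  shows "y \<bullet> (matrix_inv (V22 X C) *v y) > 0"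
  unfolding V22_def
  using pos_def_matrix_inv[OF pos_def_congruence[OF pos_def_matrix_inv[OF pos_def_gram[OF assms(1)]]
        assms(2)] assms(3)] .

lemma nonneg_matrix_inv_V22:
  fixes X :: "real^'p^'n" and C :: "real^'s^'p"
  assumes "rank X = CARD('p)" and "rank C = CARD('s)"
  shows "y \<bullet> (matrix_inv (V22 X C) *v y) \<ge> 0"
  using pos_def_matrix_inv_V22[OF assms, of y] by (cases "y = 0") auto

section \<open>Least squares statistics\<close>

lemma ls_est_fit_plus_orth:
  fixes X :: "real^'p^'n"
  assumes "rank X = CARD('p)" and "transpose X *v r = 0"
  shows "ls_est X (X *v b + r) = b"
proof -
  have "transpose X *v (X *v b + r) = (transpose X ** X) *v b"
    using assms(2) by (simp add: matrix_vector_right_distrib matrix_vector_mul_assoc)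
  then show ?thesis
    unfolding ls_est_def
    using matrix_inv_left[OF invertible_if_pos_def[OF pos_def_gram[OF assms(1)]]]
    by (simp add: matrix_vector_mul_assoc)
qed

lemma sigma_hat_fit_plus_orth:
  fixes X :: "real^'p^'n"
  assumes "rank X = CARD('p)" and "transpose X *v r = 0"
  shows "sigma_hat X (X *v b + r) = norm r / sqrt (real CARD('n) - real CARD('p))"
  unfolding sigma_hat_def ls_est_fit_plus_orth[OF assms]
  by (simp add: real_sqrt_divide)

lemma exists_orth_residual:
  fixes X :: "real^'p^'n"
  assumes "CARD('n) > CARD('p)"
  obtains r where "r \<noteq> 0" and "transpose X *v r = 0"
proof -
  have "rank (transpose X) \<noteq> CARD('n)"
    using rank_bound[of "transpose X"] assms by linarith
  then show ?thesis
    using that matrix_nonfull_linear_equations_eq by blast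
qed

lemma sigma_hat_nonneg:
  fixes X :: "real^'p^'n"
  assumes "rank X = CARD('p)"
  shows "sigma_hat X Y \<ge> 0"
  using rank_bound[of X] assms unfolding sigma_hat_def by simp

lemma F_stat_nonneg:
  fixes X :: "real^'p^'n" and C :: "real^'s^'p"
  assumes "rank X = CARD('p)" and "rank C = CARD('s)"
  shows "F_stat X C t Y \<ge> 0"
  unfolding F_stat_def using nonneg_matrix_inv_V22[OF assms] by simp

lemma exists_F_stat_value:
  fixes X :: "real^'p^'n" and C :: "real^'s^'p"
  assumes n_gt_p: "CARD('n) > CARD('p)"
    and X_rank: "rank X = CARD('p)" and C_rank: "rank C = CARD('s)" and "f > 0"
  obtains Y where "sigma_hat X Y > 0" and "F_stat X C t Y = f"
proof -
  obtain r where r: "r \<noteq> 0" "transpose X *v r = 0"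
    using exists_orth_residual[OF n_gt_p] .
  have "surj ((*v) (transpose C))"
    using C_rank full_rank_surjective rank_transpose by metis
  then obtain b where b: "transpose C *v b = t + 1"
    by (metis surjD)
  define np where "np = real CARD('n) - real CARD('p)"
  have np_pos: "np > 0" using n_gt_p unfolding np_def by simp
  define q where "q = (1 \<bullet> (matrix_inv (V22 X C) *v 1)) / real CARD('s)"
  have "(1 :: real^'s) \<noteq> 0" by (simp add: vec_eq_iff)
  then have q_pos: "q > 0"
    unfolding q_def using pos_def_matrix_inv_V22[OF X_rank C_rank] by simp
  define s where "s = sqrt (q / f)"
  have s_pos: "s > 0" unfolding s_def using q_pos \<open>f > 0\<close> by simp
  define Y where "Y = X *v b + (s * sqrt np / norm r) *\<^sub>R r"
  have orth: "transpose X *v ((s * sqrt np / norm r) *\<^sub>R r) = 0"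
    using r(2) by (simp add: matrix_vector_mult_scaleR)
  have sigma_Y: "sigma_hat X Y = s"
    unfolding Y_def sigma_hat_fit_plus_orth[OF X_rank orth]
    using r(1) s_pos np_pos by (simp add: np_def)
  have "tau_hat X C t Y = 1"
    unfolding Y_def tau_hat_def ls_est_fit_plus_orth[OF X_rank orth] b by simp
  then have "F_stat X C t Y = q / s\<^sup>2"
    unfolding F_stat_def sigma_Y q_def by simp
  also have "\<dots> = f"
    unfolding s_def using q_pos \<open>f > 0\<close> by simp
  finally show ?thesis
    using that sigma_Y s_pos by blast
qed

lemma continuous_on_matrix_vector_mult [continuous_intros]:
  "continuous_on S g \<Longrightarrow> continuous_on S (\<lambda>x. (A :: real^'m^'k) *v g x)"
  by (rule bounded_linear.continuous_on[OF matrix_vector_mul_bounded_linear])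

lemma continuous_on_ls_est: "continuous_on S (ls_est X)"
  unfolding ls_est_def by (intro continuous_intros)

lemma continuous_on_sigma_hat: "continuous_on S (sigma_hat X)"
  unfolding sigma_hat_def divide_inverse by (intro continuous_intros continuous_on_ls_est)

lemma continuous_on_tau_hat: "continuous_on S (tau_hat X C t)"
  unfolding tau_hat_def by (intro continuous_intros continuous_on_ls_est)

lemma continuous_on_F_stat: "continuous_on {Y. sigma_hat X Y \<noteq> 0} (F_stat X C t)"
  unfolding F_stat_def
  by (intro continuous_intros continuous_on_tau_hat continuous_on_sigma_hat) auto

lemma borel_measurable_F_stat: "F_stat X C t \<in> borel_measurable borel"
  unfolding F_stat_def
  by (intro borel_measurable_divide borel_measurable_const borel_measurable_continuous_onI
      continuous_intros continuous_on_tau_hat continuous_on_sigma_hat)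

lemma open_sigma_hat_pos_sqrt_F_stat_in:
  assumes "open T"
  shows "open {Y. sigma_hat X Y > 0 \<and> sqrt (F_stat X C t Y) \<in> T}"
proof -
  define U where "U = {Y. sigma_hat X Y > 0}"
  have "open U"
    unfolding U_def by (intro open_Collect_less continuous_intros continuous_on_sigma_hat)
  moreover have "continuous_on U (\<lambda>Y. sqrt (F_stat X C t Y))"
    by (intro continuous_intros continuous_on_subset[OF continuous_on_F_stat]) (auto simp: U_def)
  ultimately have "open (U \<inter> (\<lambda>Y. sqrt (F_stat X C t Y)) -` T)"
    using continuous_open_preimage \<open>open T\<close> by blast
  moreover have "U \<inter> (\<lambda>Y. sqrt (F_stat X C t Y)) -` T
      = {Y. sigma_hat X Y > 0 \<and> sqrt (F_stat X C t Y) \<in> T}"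
    unfolding U_def by auto
  ultimately show ?thesis by simp
qed

section \<open>The length of the interval\<close>

definition half_length :: "real^'p^'n \<Rightarrow> real^'p \<Rightarrow> real^'s^'p \<Rightarrow> real^'s \<Rightarrow> (real \<Rightarrow> real)
                            \<Rightarrow> real^'n \<Rightarrow> real" where
  "half_length X a C t d Y = sqrt (v11 X a) * sigma_hat X Y * d (sqrt (F_stat X C t Y))"

text \<open>No sign condition is needed: if the half-length is negative, the interval is empty
  and \<open>ennreal\<close> maps the negative length to \<open>0\<close>.\<close>

lemma emeasure_J_int:
  "emeasure lborel (J_int X a C t d Y) = ennreal (2 * half_length X a C t d Y)"
proof (cases "half_length X a C t d Y \<ge> 0")
  case True
  then show ?thesis
    unfolding J_int_def half_length_def[symmetric] by simp
next
  case False
  then show ?thesis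
    unfolding J_int_def half_length_def[symmetric] by (simp add: ennreal_neg)
qed

lemma expected_length_eq_nn_integral:
  "expected_length X a C t d \<beta> \<sigma>
     = (\<integral>\<^sup>+ Y. ennreal (2 * half_length X a C t d Y) \<partial>model_law X \<beta> \<sigma>)"
  unfolding expected_length_def emeasure_J_int ..

lemma borel_measurable_half_length:
  fixes X :: "real^'p^'n" and C :: "real^'s^'p"
  assumes "rank X = CARD('p)" and "rank C = CARD('s)"
    and d_meas: "d \<in> borel_measurable (restrict_space borel {0..})"
  shows "half_length X a C t d \<in> borel_measurable borel"
proof -
  have [measurable]: "F_stat X C t \<in> borel_measurable borel"
    by (rule borel_measurable_F_stat)
  have "(\<lambda>Y. sqrt (F_stat X C t Y)) \<in> borel \<rightarrow>\<^sub>M restrict_space borel {0..}"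
    by (rule measurable_restrict_space2) (use F_stat_nonneg[OF assms(1,2)] in auto)
  from measurable_comp[OF this d_meas]
  have [measurable]: "(\<lambda>Y. d (sqrt (F_stat X C t Y))) \<in> borel_measurable borel"
    by (simp add: comp_def)
  have [measurable]: "sigma_hat X \<in> borel_measurable borel"
    by (intro borel_measurable_continuous_onI continuous_on_sigma_hat)
  show ?thesis
    unfolding half_length_def by measurable
qed

lemma half_length_nonneg:
  fixes X :: "real^'p^'n" and C :: "real^'s^'p"
  assumes "rank X = CARD('p)" and "rank C = CARD('s)" and "a \<noteq> 0"
    and "\<And>x. x \<ge> 0 \<Longrightarrow> d x > 0"
  shows "half_length X a C t d Y \<ge> 0"
  unfolding half_length_def
  using v11_pos[OF assms(1,3)] sigma_hat_nonneg[OF assms(1)] F_stat_nonneg[OF assms(1,2)] assms(4)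
  by (simp add: less_imp_le)

lemma half_length_mono:
  fixes X :: "real^'p^'n" and C :: "real^'s^'p"
  assumes "rank X = CARD('p)" and "rank C = CARD('s)" and "a \<noteq> 0"
    and "\<And>x. x \<ge> 0 \<Longrightarrow> e x \<le> d x"
  shows "half_length X a C t e Y \<le> half_length X a C t d Y"
  unfolding half_length_def
  using v11_pos[OF assms(1,3)] sigma_hat_nonneg[OF assms(1)] F_stat_nonneg[OF assms(1,2)] assms(4)
  by (intro mult_left_mono) auto

lemma half_length_strict_mono:
  fixes X :: "real^'p^'n"
  assumes "rank X = CARD('p)" and "a \<noteq> 0" and "sigma_hat X Y > 0"
    and "e (sqrt (F_stat X C t Y)) < d (sqrt (F_stat X C t Y))"
  shows "half_length X a C t e Y < half_length X a C t d Y"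
  unfolding half_length_def
  using v11_pos[OF assms(1,2)] assms(3,4) by simp

section \<open>Open sets carry positive probability\<close>

lemma emeasure_density_open_pos:
  fixes f :: "'a::euclidean_space \<Rightarrow> ennreal"
  assumes f_meas: "f \<in> borel_measurable borel" and f_pos: "\<And>x. f x > 0"
    and "open S" and "S \<noteq> {}"
  shows "emeasure (density lborel f) S > 0"
proof (rule ccontr)
  assume "\<not> emeasure (density lborel f) S > 0"
  then have "(\<integral>\<^sup>+ x. f x * indicator S x \<partial>lborel) = 0"
    using \<open>open S\<close> f_meas by (simp add: emeasure_density)
  then have "AE x in lborel. f x * indicator S x = 0"
    using \<open>open S\<close> f_meas by (simp add: nn_integral_0_iff_AE)
  then have "AE x in lborel. x \<notin> S"
  proof eventually_elim
    case (elim x)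
    then show ?case using f_pos[of x] by (auto simp: indicator_def)
  qed
  then have "S \<in> null_sets lborel"
    using \<open>open S\<close> by (simp add: AE_iff_null_sets)
  then have "S \<in> null_sets lebesgue"
    using \<open>open S\<close> by (simp add: null_sets_completion_iff)
  then show False
    using open_not_negligible[OF \<open>open S\<close> \<open>S \<noteq> {}\<close>] by (simp add: negligible_iff_null_sets)
qed

lemma sets_model_law [measurable_cong]: "sets (model_law X \<beta> \<sigma>) = sets borel"
  unfolding model_law_def by simp

lemma emeasure_model_law_open_pos:
  assumes "\<sigma> > 0" and "open S" and "S \<noteq> {}"
  shows "emeasure (model_law X \<beta> \<sigma>) S > 0"
  unfolding model_law_def
  using assms by (intro emeasure_density_open_pos) (auto simp: normal_density_pos prod_pos)

lemma nn_integral_strict_mono_on_pos_set: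
  assumes f_meas: "f \<in> borel_measurable M" and g_meas: "g \<in> borel_measurable M"
    and "(\<integral>\<^sup>+ x. f x \<partial>M) \<noteq> \<infinity>" and "\<And>x. f x \<le> g x"
    and "A \<in> sets M" and "emeasure M A > 0" and "\<And>x. x \<in> A \<Longrightarrow> f x < g x"
  shows "(\<integral>\<^sup>+ x. f x \<partial>M) < (\<integral>\<^sup>+ x. g x \<partial>M)"
proof (rule nn_integral_less[OF f_meas g_meas \<open>_ \<noteq> \<infinity>\<close>])
  show "AE x in M. f x \<le> g x" using assms(4) by simp
  show "\<not> (AE x in M. g x \<le> f x)"
  proof
    assume "AE x in M. g x \<le> f x"
    then have "AE x in M. x \<notin> A"
      by eventually_elim (use assms(7) in \<open>auto simp: not_le[symmetric]\<close>)
    then have "A \<in> null_sets M"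
      using \<open>A \<in> sets M\<close> by (simp add: AE_iff_null_sets)
    then show False
      using \<open>emeasure M A > 0\<close> by (simp add: null_setsD1)
  qed
qed

lemma emeasure_F_stat_band_pos:
  fixes X :: "real^'p^'n" and C :: "real^'s^'p"
  assumes n_gt_p: "CARD('n) > CARD('p)"
    and X_rank: "rank X = CARD('p)" and C_rank: "rank C = CARD('s)"
    and "\<sigma> > 0" and "0 \<le> lo" and "lo < hi"
  shows "emeasure (model_law X \<beta> \<sigma>) {Y. sigma_hat X Y > 0 \<and> sqrt (F_stat X C t Y) \<in> {lo<..<hi}} > 0"
proof (rule emeasure_model_law_open_pos[OF \<open>\<sigma> > 0\<close>])
  show "open {Y. sigma_hat X Y > 0 \<and> sqrt (F_stat X C t Y) \<in> {lo<..<hi}}"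
    by (intro open_sigma_hat_pos_sqrt_F_stat_in open_greaterThanLessThan)
  define m where "m = (lo + hi) / 2"
  have "m > 0" "m \<in> {lo<..<hi}" using assms(5,6) unfolding m_def by auto
  then obtain Y where "sigma_hat X Y > 0" "F_stat X C t Y = m\<^sup>2"
    using exists_F_stat_value[OF n_gt_p X_rank C_rank, of "m\<^sup>2"] by auto
  with \<open>m > 0\<close> \<open>m \<in> {lo<..<hi}\<close>
  have "Y \<in> {Y. sigma_hat X Y > 0 \<and> sqrt (F_stat X C t Y) \<in> {lo<..<hi}}" by simp
  then show "{Y. sigma_hat X Y > 0 \<and> sqrt (F_stat X C t Y) \<in> {lo<..<hi}} \<noteq> {}" by blast
qed

lemma expected_length_strict_mono:
  fixes X :: "real^'p^'n" and C :: "real^'s^'p"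
  assumes X_rank: "rank X = CARD('p)" and C_rank: "rank C = CARD('s)" and a_nz: "a \<noteq> 0"
    and d_meas: "d \<in> borel_measurable (restrict_space borel {0..})"
    and e_meas: "e \<in> borel_measurable (restrict_space borel {0..})"
    and e_pos: "\<And>x. x \<ge> 0 \<Longrightarrow> e x > 0" and e_le_d: "\<And>x. x \<ge> 0 \<Longrightarrow> e x \<le> d x"
    and finite_len: "expected_length X a C t e \<beta> \<sigma> < \<infinity>"
    and A_sets: "A \<in> sets borel" and A_pos: "emeasure (model_law X \<beta> \<sigma>) A > 0"
    and e_less_d: "\<And>Y. Y \<in> A \<Longrightarrow>
       sigma_hat X Y > 0 \<and> e (sqrt (F_stat X C t Y)) < d (sqrt (F_stat X C t Y))"
  shows "expected_length X a C t e \<beta> \<sigma> < expected_length X a C t d \<beta> \<sigma>"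
  unfolding expected_length_eq_nn_integral
proof (rule nn_integral_strict_mono_on_pos_set[where A = A])
  have [measurable]: "half_length X a C t d \<in> borel_measurable borel"
    "half_length X a C t e \<in> borel_measurable borel"
    using borel_measurable_half_length[OF X_rank C_rank] d_meas e_meas by blast+
  show "(\<lambda>Y. ennreal (2 * half_length X a C t d Y)) \<in> borel_measurable (model_law X \<beta> \<sigma>)"
    "(\<lambda>Y. ennreal (2 * half_length X a C t e Y)) \<in> borel_measurable (model_law X \<beta> \<sigma>)"
    by measurable
  show "(\<integral>\<^sup>+ Y. ennreal (2 * half_length X a C t e Y) \<partial>model_law X \<beta> \<sigma>) \<noteq> \<infinity>"
    using finite_len by (simp add: expected_length_eq_nn_integral)
  show "ennreal (2 * half_length X a C t e Y) \<le> ennreal (2 * half_length X a C t d Y)" for Y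
    using half_length_mono[OF X_rank C_rank a_nz e_le_d] by (intro ennreal_leI) simp
  show "A \<in> sets (model_law X \<beta> \<sigma>)" using A_sets by simp
  show "emeasure (model_law X \<beta> \<sigma>) A > 0" by (rule A_pos)
  show "ennreal (2 * half_length X a C t e Y) < ennreal (2 * half_length X a C t d Y)"
    if "Y \<in> A" for Y
  proof (rule ennreal_lessI)
    have "half_length X a C t e Y < half_length X a C t d Y"
      using e_less_d[OF that] by (intro half_length_strict_mono[OF X_rank a_nz]) auto
    then show "2 * half_length X a C t e Y < 2 * half_length X a C t d Y" by simp
    moreover have "half_length X a C t e Y \<ge> 0"
      by (rule half_length_nonneg[OF X_rank C_rank a_nz e_pos])
    ultimately show "0 < 2 * half_length X a C t d Y" by linarith
  qed
qed

theorem theorem4: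
  fixes X :: "real^'p^'n" and a :: "real^'p" and C :: "real^'s^'p" and t :: "real^'s"
    and \<beta> :: "real^'p" and \<sigma> :: real
    and d1 d2 :: "real \<Rightarrow> real" and \<epsilon> lo hi :: real
  assumes n_gt_p: "CARD('n) > CARD('p)"
    and X_rank: "rank X = CARD('p)"
    and s_lt_p: "CARD('s) < CARD('p)"
    and C_rank: "rank C = CARD('s)"
    and a_nz: "a \<noteq> 0"
    and a_notin: "a \<notin> span (columns C)"
    and sigma_pos: "\<sigma> > 0"
    and uncorr: "(\<chi> j. \<integral>Y. (tau_hat X C t Y - (transpose C *v \<beta> - t)) $ j
                          * (theta_hat X a Y - a \<bullet> \<beta>) \<partial>(model_law X \<beta> \<sigma>)) = 0"
    and d1_meas: "d1 \<in> borel_measurable (restrict_space borel {0..})"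
    and d2_meas: "d2 \<in> borel_measurable (restrict_space borel {0..})"
    and d1_pos: "\<And>x. x \<ge> 0 \<Longrightarrow> d1 x > 0"
    and d2_pos: "\<And>x. x \<ge> 0 \<Longrightarrow> d2 x > 0"
    and d_ge: "\<And>x. x \<ge> 0 \<Longrightarrow> d1 x \<ge> d2 x"
    and eps_pos: "\<epsilon> > 0"
    and lo_hi: "0 \<le> lo" "lo < hi"
    and d_gap: "\<And>x. x \<in> {lo..hi} \<Longrightarrow> d1 x > d2 x + \<epsilon>"
    and finite_len: "expected_length X a C t d2 \<beta> \<sigma> < \<infinity>"
  shows "expected_length X a C t d1 \<beta> \<sigma> > expected_length X a C t d2 \<beta> \<sigma>"
  \<comment> \<open>\<open>s_lt_p\<close>, \<open>a_notin\<close> and \<open>uncorr\<close> only serve to express the expected lengths through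
    \<open>\<parallel>\<gamma>\<parallel>\<close>, and \<open>d1_pos\<close> follows from \<open>d2_pos\<close> and \<open>d_ge\<close>; none of them is needed here.\<close>
proof -
  let ?S = "{Y. sigma_hat X Y > 0 \<and> sqrt (F_stat X C t Y) \<in> {lo<..<hi}}"
  have "?S \<in> sets borel"
    by (intro borel_open open_sigma_hat_pos_sqrt_F_stat_in open_greaterThanLessThan)
  moreover have "emeasure (model_law X \<beta> \<sigma>) ?S > 0"
    using emeasure_F_stat_band_pos[OF n_gt_p X_rank C_rank sigma_pos lo_hi] .
  moreover have "d2 (sqrt (F_stat X C t Y)) < d1 (sqrt (F_stat X C t Y))" if "Y \<in> ?S" for Y
    using that d_gap[of "sqrt (F_stat X C t Y)"] eps_pos by auto
  ultimately show ?thesis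
    using expected_length_strict_mono[OF X_rank C_rank a_nz d1_meas d2_meas d2_pos d_ge finite_len]
    by auto
qed

end
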